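(* Let $(x^{(k)})_{k\in\mathbb N}$ be a sequence of nonabsorbing mixed action profiles in $X$ converging to $x$, and suppose ${\cal E}_J(x^{(k)})\ne\emptyset$ for every $k$. Then $x\in X$ and ${\cal E}_J(x)\ne\emptyset$.
   Context: $I$ is a finite set of players, $A_i$ finite nonempty action sets, $A=\prod_iA_i$, $p:A\to[0,1]$ an absorption probability function. Let $\Xi_i=\Delta(A_i)$, $\Xi=\prod_i\Xi_i$, and for $x\in\Xi$ let $p(x)=\sum_{a\in A}p(a)\prod_jx_j(a_j)$ (multilinear extension; similarly for partially pure profiles such as $(a_J,x_{-J})$). Let $B=\{a\in A:p(a)=0\}$ and let $X=\{x\in\Xi: p(x)=0\}$ be the set of nonabsorbing mixed action profiles (equivalently, mixed profiles whose support $\prod_i{\rm supp}(x_i)$ is contained in a connected component of the graph on $B$ where two profiles are adjacent iff they differ in exactly one player's action). For $x\in X$, a pair $(J,a_J)$ with $\emptyset\ne J\subseteq I$ and $a_J\in\prod_{i\in J}A_i$ is an exit at $x$ if $p(a_J,x_{-J})>0$ and $p(a_{J'},x_{-J'})=0$ for every proper subset $J'\subsetneq J$. It is a joint exit if $|J|\ge2$. ${\cal E}_J(x)$ denotes the set of joint exits at $x$. *)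

theory Defs
  imports "HOL-Analysis.Analysis"
begin

(* Players: the finite type 'i (I = UNIV). Actions of player i: the finite nonempty set A i.
   A mixed action profile x assigns to each player i a probability vector x i on A i
   (zero outside A i). *)

definition mixed_profiles :: "('i \<Rightarrow> 'a set) \<Rightarrow> ('i \<Rightarrow> 'a \<Rightarrow> real) set" where
  "mixed_profiles A = {x. \<forall>i. (\<forall>c. 0 \<le> x i c) \<and> (\<forall>c. c \<notin> A i \<longrightarrow> x i c = 0)
                                \<and> (\<Sum>c\<in>A i. x i c) = 1}"

definition mext :: "('i::finite \<Rightarrow> 'a set) \<Rightarrow> (('i \<Rightarrow> 'a) \<Rightarrow> real) \<Rightarrow> ('i \<Rightarrow> 'a \<Rightarrow> real) \<Rightarrow> real" where
  "mext A p x = (\<Sum>a\<in>Pi\<^sub>E UNIV A. p a * (\<Prod>j\<in>UNIV. x j (a j)))"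

definition pure_dev :: "'i set \<Rightarrow> ('i \<Rightarrow> 'a) \<Rightarrow> ('i \<Rightarrow> 'a \<Rightarrow> real) \<Rightarrow> ('i \<Rightarrow> 'a \<Rightarrow> real)" where
  "pure_dev J aJ x = (\<lambda>i. if i \<in> J then (\<lambda>c. if c = aJ i then 1 else 0) else x i)"

definition nonabsorbing :: "('i::finite \<Rightarrow> 'a set) \<Rightarrow> (('i \<Rightarrow> 'a) \<Rightarrow> real) \<Rightarrow> ('i \<Rightarrow> 'a \<Rightarrow> real) set" where
  "nonabsorbing A p = {x \<in> mixed_profiles A. mext A p x = 0}"

definition is_exit :: "('i::finite \<Rightarrow> 'a set) \<Rightarrow> (('i \<Rightarrow> 'a) \<Rightarrow> real) \<Rightarrow> ('i \<Rightarrow> 'a \<Rightarrow> real)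
                        \<Rightarrow> 'i set \<Rightarrow> ('i \<Rightarrow> 'a) \<Rightarrow> bool" where
  "is_exit A p x J aJ \<longleftrightarrow> J \<noteq> {} \<and> aJ \<in> Pi\<^sub>E J A \<and> mext A p (pure_dev J aJ x) > 0
      \<and> (\<forall>J'. J' \<subset> J \<longrightarrow> mext A p (pure_dev J' aJ x) = 0)"

definition joint_exits :: "('i::finite \<Rightarrow> 'a set) \<Rightarrow> (('i \<Rightarrow> 'a) \<Rightarrow> real) \<Rightarrow> ('i \<Rightarrow> 'a \<Rightarrow> real)
                            \<Rightarrow> ('i set \<times> ('i \<Rightarrow> 'a)) set" where
  "joint_exits A p x = {(J, aJ). is_exit A p x J aJ \<and> 2 \<le> card J}"

end

theory Submission
  imports Defs
begin

(* Positivity of finitely many coordinates is an open condition, so the support of the limit x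
   is contained in the support of some x^(k); since whether p(y) vanishes depends only on the
   support of y, x is nonabsorbing. A joint exit (J, a_J) at x^(k) provides a pure profile a
   with p(a) > 0 that equals a_J on J and lies in the support of x^(k) off J. Every unilateral
   deviation (a_i, x_{-i}) has support inside that of (a_i, x^(k)_{-i}), which is a proper
   subdeviation of the exit if i is in J and has support inside that of x^(k) otherwise; either
   way it is nonabsorbing. Hence a set K of least size with p(a_K, x_{-K}) > 0 yields an exit
   (K, a_K) at x with |K| >= 2. *)

definition profile_support :: "('i \<Rightarrow> 'a \<Rightarrow> real) \<Rightarrow> ('i \<times> 'a) set" where
  "profile_support x = {(j, c). 0 < x j c}"

lemma continuous_on_profile_entry: "continuous_on UNIV (\<lambda>x::'i \<Rightarrow> 'a \<Rightarrow> real. x i c)"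
  by (rule continuous_on_product_then_coordinatewise[OF continuous_on_product_coordinates])

lemma mixed_profile_nonneg: "x \<in> mixed_profiles A \<Longrightarrow> 0 \<le> x j c"
  by (simp add: mixed_profiles_def)

lemma closed_mixed_profiles: "closed (mixed_profiles A)"
proof -
  have "mixed_profiles A = (\<Inter>i. \<Inter>c. {x. 0 \<le> x i c}) \<inter> (\<Inter>i. \<Inter>c\<in>- A i. {x. x i c = 0})
      \<inter> (\<Inter>i. {x. (\<Sum>c\<in>A i. x i c) = 1})"
    unfolding mixed_profiles_def by auto
  also have "closed \<dots>"
    by (intro closed_Int closed_INT ballI closed_Collect_le closed_Collect_eq continuous_on_sum
        continuous_on_const continuous_on_profile_entry)
  finally show ?thesis .
qed

lemma eventually_profile_support_subset:
  assumes "finite (profile_support x)" "xs \<longlonglongrightarrow> x"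
  shows "eventually (\<lambda>k. profile_support x \<subseteq> profile_support (xs k)) sequentially"
proof -
  have "eventually (\<lambda>k. 0 < xs k j c) sequentially" if "(j, c) \<in> profile_support x" for j c
    using that continuous_on_tendsto_compose[OF continuous_on_profile_entry assms(2)]
    by (intro order_tendstoD(1)) (auto simp: profile_support_def)
  then have "eventually (\<lambda>k. \<forall>jc\<in>profile_support x. jc \<in> profile_support (xs k)) sequentially"
    using assms(1) by (intro eventually_ball_finite) (auto simp: profile_support_def)
  then show ?thesis by (simp add: subset_eq)
qed

lemma finite_profile_support_mixed:
  assumes "\<And>i. finite (A i)" "x \<in> mixed_profiles A"
  shows "finite (profile_support (x :: 'i::finite \<Rightarrow> 'a \<Rightarrow> real))"
proof (rule finite_subset)
  show "profile_support x \<subseteq> Sigma UNIV A"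
    using assms(2) by (force simp: profile_support_def mixed_profiles_def)
  show "finite (Sigma UNIV A)" using assms(1) by (intro finite_SigmaI) auto
qed

lemma profile_support_subset_iff:
  "profile_support x \<subseteq> profile_support y \<longleftrightarrow> (\<forall>j c. 0 < x j c \<longrightarrow> 0 < y j c)"
  by (auto simp: profile_support_def)

lemma mext_nonneg:
  assumes "\<And>a. a \<in> Pi\<^sub>E UNIV A \<Longrightarrow> 0 \<le> p a" "\<And>j c. 0 \<le> y j c"
  shows "0 \<le> mext A p y"
  unfolding mext_def using assms by (intro sum_nonneg mult_nonneg_nonneg prod_nonneg) auto

lemma mext_pos_iff:
  assumes "\<And>i. finite (A i)" "\<And>a. a \<in> Pi\<^sub>E UNIV A \<Longrightarrow> 0 \<le> p a" "\<And>j c. 0 \<le> y j c"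
  shows "0 < mext A p y \<longleftrightarrow> (\<exists>a\<in>Pi\<^sub>E UNIV A. 0 < p a \<and> (\<forall>j. 0 < y j (a j)))"
proof -
  have term_nonneg: "0 \<le> p a * (\<Prod>j\<in>UNIV. y j (a j))" if "a \<in> Pi\<^sub>E UNIV A" for a
    using assms(2,3) that by (simp add: prod_nonneg)
  have term_pos: "p a * (\<Prod>j\<in>UNIV. y j (a j)) \<noteq> 0 \<longleftrightarrow> 0 < p a \<and> (\<forall>j. 0 < y j (a j))"
    if "a \<in> Pi\<^sub>E UNIV A" for a
    using assms(2)[OF that] assms(3) by (auto simp: less_le)
  have "0 < mext A p y \<longleftrightarrow> mext A p y \<noteq> 0"
    using mext_nonneg[of A p y, OF assms(2,3)] by linarith
  also have "\<dots> \<longleftrightarrow> (\<exists>a\<in>Pi\<^sub>E UNIV A. p a * (\<Prod>j\<in>UNIV. y j (a j)) \<noteq> 0)"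
    unfolding mext_def using assms(1) term_nonneg by (subst sum_nonneg_eq_0_iff) (auto simp: finite_PiE)
  finally show ?thesis using term_pos by blast
qed

lemma mext_eq_0_if_profile_support_subset:
  assumes "\<And>i. finite (A i)" "\<And>a. a \<in> Pi\<^sub>E UNIV A \<Longrightarrow> 0 \<le> p a"
    and "\<And>j c. 0 \<le> y j c" "\<And>j c. 0 \<le> z j c"
    and "profile_support y \<subseteq> profile_support z" "mext A p z = 0"
  shows "mext A p y = 0"
proof (rule ccontr)
  assume "mext A p y \<noteq> 0"
  then have "0 < mext A p y" using mext_nonneg[of A p y, OF assms(2,3)] by linarith
  then have "0 < mext A p z"
    using assms(5) by (auto simp: mext_pos_iff[OF assms(1,2,3)] mext_pos_iff[OF assms(1,2,4)]
        profile_support_subset_iff)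
  then show False using assms(6) by simp
qed

lemma pure_dev_nonneg:
  assumes "\<And>j c. 0 \<le> x j c" shows "0 \<le> pure_dev J a x j c"
  using assms unfolding pure_dev_def by auto

lemma profile_support_pure_dev_mono:
  assumes "profile_support x \<subseteq> profile_support y"
  shows "profile_support (pure_dev J a x) \<subseteq> profile_support (pure_dev J a y)"
  using assms by (auto simp: profile_support_subset_iff pure_dev_def)

lemma pure_dev_restrict:
  assumes "J \<subseteq> K"
  shows "pure_dev J (restrict a K) x = pure_dev J a x"
  using assms unfolding pure_dev_def by (auto intro!: ext)

lemma is_exit_witnessE:
  assumes "\<And>i. finite (A i)" "\<And>a. a \<in> Pi\<^sub>E UNIV A \<Longrightarrow> 0 \<le> p a" "\<And>j c. 0 \<le> y j c"
    and "is_exit A p y J aJ"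
  obtains a where "a \<in> Pi\<^sub>E UNIV A" "0 < p a"
    "\<And>j. j \<in> J \<Longrightarrow> a j = aJ j" "\<And>j. j \<notin> J \<Longrightarrow> 0 < y j (a j)"
proof -
  have "0 < mext A p (pure_dev J aJ y)"
    using assms(4) by (simp add: is_exit_def)
  then obtain a where a: "a \<in> Pi\<^sub>E UNIV A" "0 < p a" "\<And>j. 0 < pure_dev J aJ y j (a j)"
    using mext_pos_iff[of A p "pure_dev J aJ y", OF assms(1,2) pure_dev_nonneg[OF assms(3)]]
    by blast
  show thesis
  proof (rule that[OF a(1,2)])
    show "a j = aJ j" if "j \<in> J" for j
      using a(3)[of j] that by (auto simp: pure_dev_def split: if_splits)
    show "0 < y j (a j)" if "j \<notin> J" for j
      using a(3)[of j] that by (simp add: pure_dev_def)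
  qed
qed

lemma ex_is_exit_restrict:
  fixes x :: "'i::finite \<Rightarrow> 'a \<Rightarrow> real"
  assumes "\<And>a. a \<in> Pi\<^sub>E UNIV A \<Longrightarrow> 0 \<le> p a" "\<And>j c. 0 \<le> x j c"
    and "mext A p x = 0" "a \<in> Pi\<^sub>E UNIV A" "0 < mext A p (pure_dev S a x)"
  obtains K where "is_exit A p x K (restrict a K)"
proof -
  obtain K where K: "0 < mext A p (pure_dev K a x)"
    and K_least: "\<And>K'. 0 < mext A p (pure_dev K' a x) \<Longrightarrow> card K \<le> card K'"
    using ex_has_least_nat[where P = "\<lambda>K. 0 < mext A p (pure_dev K a x)" and m = card] assms(5)
    by blast
  have "K \<noteq> {}"
    using K assms(3) by (auto simp: pure_dev_def)
  moreover have "mext A p (pure_dev K' (restrict a K) x) = 0" if "K' \<subset> K" for K'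
  proof -
    have "\<not> 0 < mext A p (pure_dev K' a x)"
      using K_least psubset_card_mono[OF finite that] by fastforce
    then show ?thesis
      using mext_nonneg[of A p "pure_dev K' a x", OF assms(1) pure_dev_nonneg[OF assms(2)]] that
      by (simp add: pure_dev_restrict less_le)
  qed
  ultimately have "is_exit A p x K (restrict a K)"
    using K assms(4) by (auto simp: is_exit_def pure_dev_restrict)
  then show thesis by (rule that)
qed

lemma joint_exit_singleton_dev_eq_0:
  assumes "\<And>i. finite (A i)" "\<And>a. a \<in> Pi\<^sub>E UNIV A \<Longrightarrow> 0 \<le> p a" "\<And>j c. 0 \<le> y j c"
    and "mext A p y = 0" "(J, aJ) \<in> joint_exits A p y"
    and "\<And>j. j \<in> J \<Longrightarrow> a j = aJ j" "\<And>j. j \<notin> J \<Longrightarrow> 0 < y j (a j)"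
  shows "mext A p (pure_dev {i} a y) = 0"
proof (cases "i \<in> J")
  case True
  then have "{i} \<subset> J"
    using assms(5) by (auto simp: joint_exits_def)
  moreover have "pure_dev {i} a y = pure_dev {i} aJ y"
    using True assms(6) by (auto simp: pure_dev_def)
  ultimately show ?thesis
    using assms(5) by (simp add: joint_exits_def is_exit_def)
next
  case False
  have "profile_support (pure_dev {i} a y) \<subseteq> profile_support y"
    using False assms(7) by (auto simp: profile_support_subset_iff pure_dev_def)
  then show ?thesis
    using mext_eq_0_if_profile_support_subset[of A p "pure_dev {i} a y" y] assms(1-4)
    by (simp add: pure_dev_nonneg)
qed

lemma joint_exits_ne_if_profile_support_subset:
  fixes x y :: "'i::finite \<Rightarrow> 'a \<Rightarrow> real"
  assumes finA: "\<And>i. finite (A i)" and p_nonneg: "\<And>a. a \<in> Pi\<^sub>E UNIV A \<Longrightarrow> 0 \<le> p a"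
    and x_nonneg: "\<And>j c. 0 \<le> x j c" and y_nonneg: "\<And>j c. 0 \<le> y j c"
    and supp: "profile_support x \<subseteq> profile_support y"
    and y_zero: "mext A p y = 0" and "joint_exits A p y \<noteq> {}"
  shows "joint_exits A p x \<noteq> {}"
proof -
  have x_zero: "mext A p x = 0"
    by (rule mext_eq_0_if_profile_support_subset[OF finA p_nonneg x_nonneg y_nonneg supp y_zero])
  obtain J aJ where exit_y: "(J, aJ) \<in> joint_exits A p y"
    using assms(7) by auto
  then obtain a where a: "a \<in> Pi\<^sub>E UNIV A" "0 < p a"
    "\<And>j. j \<in> J \<Longrightarrow> a j = aJ j" "\<And>j. j \<notin> J \<Longrightarrow> 0 < y j (a j)"
    using is_exit_witnessE[of A p y J aJ, OF finA p_nonneg y_nonneg] by (auto simp: joint_exits_def)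
  have singleton_zero: "mext A p (pure_dev {i} a x) = 0" for i
  proof -
    have "mext A p (pure_dev {i} a y) = 0"
      by (rule joint_exit_singleton_dev_eq_0[OF finA p_nonneg y_nonneg y_zero exit_y a(3,4)])
    with profile_support_pure_dev_mono[OF supp] show ?thesis
      by (intro mext_eq_0_if_profile_support_subset[OF finA p_nonneg
            pure_dev_nonneg[of x, OF x_nonneg] pure_dev_nonneg[of y, OF y_nonneg]])
  qed
  have "0 < mext A p (pure_dev UNIV a x)"
    using a(1,2) mext_pos_iff[of A p "pure_dev UNIV a x", OF finA p_nonneg
        pure_dev_nonneg[of x, OF x_nonneg]]
    by (auto simp: pure_dev_def)
  then obtain K where exit_x: "is_exit A p x K (restrict a K)"
    using ex_is_exit_restrict[OF p_nonneg x_nonneg x_zero a(1)] by blast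
  have "2 \<le> card K"
  proof (rule ccontr)
    assume "\<not> 2 \<le> card K"
    moreover have "K \<noteq> {}" using exit_x by (simp add: is_exit_def)
    ultimately have "card K = 1"
      using card_gt_0_iff[of K] by simp
    then obtain i where "K = {i}"
      by (rule card_1_singletonE)
    then show False
      using exit_x singleton_zero[of i] by (simp add: is_exit_def pure_dev_restrict)
  qed
  then show ?thesis
    using exit_x by (auto simp: joint_exits_def)
qed

theorem mainTheorem5:
  fixes A :: "'i::finite \<Rightarrow> 'a set"
    and p :: "('i \<Rightarrow> 'a) \<Rightarrow> real"
    and xs :: "nat \<Rightarrow> ('i \<Rightarrow> 'a \<Rightarrow> real)"
    and x :: "'i \<Rightarrow> 'a \<Rightarrow> real"
  assumes "\<And>i. finite (A i)"
    and "\<And>i. A i \<noteq> {}"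
    and "\<And>a. a \<in> Pi\<^sub>E UNIV A \<Longrightarrow> 0 \<le> p a \<and> p a \<le> 1"
    and "\<And>k. xs k \<in> nonabsorbing A p"
    and "xs \<longlonglongrightarrow> x"
    and "\<And>k. joint_exits A p (xs k) \<noteq> {}"
  shows "x \<in> nonabsorbing A p \<and> joint_exits A p x \<noteq> {}"
proof -
  note finA = assms(1)
  have p_nonneg: "\<And>a. a \<in> Pi\<^sub>E UNIV A \<Longrightarrow> 0 \<le> p a" using assms(3) by blast
  have xs_mixed: "xs k \<in> mixed_profiles A" and xs_zero: "mext A p (xs k) = 0" for k
    using assms(4) by (auto simp: nonabsorbing_def)
  have x_mixed: "x \<in> mixed_profiles A"
    using closed_sequentially[OF closed_mixed_profiles] xs_mixed assms(5) by blast
  note xs_nonneg = mixed_profile_nonneg[OF xs_mixed] and x_nonneg = mixed_profile_nonneg[OF x_mixed]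
  obtain k where supp_k: "profile_support x \<subseteq> profile_support (xs k)"
    using eventually_profile_support_subset[OF finite_profile_support_mixed[OF finA x_mixed] assms(5)]
    unfolding eventually_sequentially by blast
  have "mext A p x = 0"
    by (rule mext_eq_0_if_profile_support_subset[OF finA p_nonneg x_nonneg xs_nonneg supp_k xs_zero])
  moreover have "joint_exits A p x \<noteq> {}"
    by (rule joint_exits_ne_if_profile_support_subset[OF finA p_nonneg x_nonneg xs_nonneg supp_k
          xs_zero assms(6)])
  ultimately show ?thesis
    using x_mixed by (simp add: nonabsorbing_def)
qed

end
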